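(* Let $S\subseteq T$ be an extension of discrete valuation rings with fraction fields $K\subseteq L$ such that $L/K$ is finite Galois of degree $m$ with Galois group $G$, let $t$ generate the maximal ideal of $T$ with valuation $v_t$, and assume $T=S[\theta]$ for some $\theta\in T$. Enumerate $G=\{\sigma_0,\dots,\sigma_{m-1}\}$ with $\sigma_0=\mathrm{id}_T$ such that $\tau=(\tau_0,\dots,\tau_{m-1}):=(\theta^{\sigma_0},\dots,\theta^{\sigma_{m-1}})$ is minimally ordered, and identify $\prod_{\sigma\in G}T$ with $\prod_{j\in[0,m-1]}T$ via $\sigma_j\leftrightarrow j$. Consider the $T$-linear Dedekind embedding $\delta\colon T\otimes_ST\to\prod_{\sigma\in G}T$, $x\otimes y\mapsto(xy^\sigma)_{\sigma\in G}$ ($T$ acting on the left tensor factor). Then: (i) for $i\in[0,m-1]$ the $(i+1)$st $T$-linear elementary divisor of $\delta$ has valuation $\phi_i:=\sum_{j\in[0,i-1]}v_t(\theta^{\sigma_i}-\theta^{\sigma_j})$; in particular $(\phi_i)_{i\in[0,m-1]}$ depends neither on the choice of $\theta$ nor on the chosen minimal ordering; (ii) the image of $\delta$ equals \[ \Bigl\{(\eta_j)_{j\in[0,m-1]}\in\prod_{j\in[0,m-1]}T\;\Bigm|\;\eta_i-\sum_{j\in[0,i-1]}\eta_jL_{j,i}(\tau)\in t^{\phi_i}T\ \text{for all } i\in[0,m-1]\Bigr\}; \] (iii) the elements $\bigl(\prod_{k\in[0,i-1]}(\theta^{\sigma_j}-\theta^{\sigma_k})\bigr)_{j\in[0,m-1]}$,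 $i\in[0,m-1]$, form a $T$-linear basis of the image of $\delta$.
   Context: $y^\sigma$ denotes the image of $y$ under $\sigma$. A tuple $(\xi_0,\dots,\xi_{m-1})$ of pairwise distinct elements of $T$ is minimally ordered if $\sum_{i\in[0,j-1]}v_t(\xi_j-\xi_i)\le\sum_{i\in[0,j-1]}v_t(\xi_k-\xi_i)$ for all $j\in[0,m-1]$ and $k\in[j+1,m-1]$. For $j<i$, $L_{j,i}(\tau):=\prod_{k\in[0,i-1]\setminus\{j\}}(\tau_i-\tau_k)/\prod_{k\in[0,i-1]\setminus\{j\}}(\tau_j-\tau_k)\in L$. Elementary divisors of an injective $T$-linear map of free rank-$m$ modules: $t^{e_0},\dots,t^{e_{m-1}}$ with $e_0\le\dots\le e_{m-1}$ such that in suitable bases the map is diagonal with these entries; the $(i+1)$st has valuation $e_i$. *)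

theory Defs
  imports Main
begin

definition subfield :: "'a::field set \<Rightarrow> bool" where
  "subfield F \<longleftrightarrow> 0 \<in> F \<and> 1 \<in> F \<and>
     (\<forall>x\<in>F. \<forall>y\<in>F. x + y \<in> F \<and> x * y \<in> F \<and> - x \<in> F) \<and>
     (\<forall>x\<in>F. x \<noteq> 0 \<longrightarrow> inverse x \<in> F)"

definition discrete_valuation :: "'a::field set \<Rightarrow> ('a \<Rightarrow> int) \<Rightarrow> bool" where
  "discrete_valuation F v \<longleftrightarrow>
     (\<forall>x\<in>F. \<forall>y\<in>F. x \<noteq> 0 \<longrightarrow> y \<noteq> 0 \<longrightarrow> v (x * y) = v x + v y) \<and>
     (\<forall>x\<in>F. \<forall>y\<in>F. x \<noteq> 0 \<longrightarrow> y \<noteq> 0 \<longrightarrow> x + y \<noteq> 0 \<longrightarrow> min (v x) (v y) \<le> v (x + y)) \<and>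
     (\<exists>x\<in>F. x \<noteq> 0 \<and> v x = 1)"

definition is_dvr :: "'a::field set \<Rightarrow> 'a set \<Rightarrow> bool" where
  "is_dvr F R \<longleftrightarrow> subfield F \<and>
     (\<exists>v. discrete_valuation F v \<and> R = {x \<in> F. x = 0 \<or> 0 \<le> v x})"

definition field_automorphism :: "('a::field \<Rightarrow> 'a) \<Rightarrow> bool" where
  "field_automorphism \<sigma> \<longleftrightarrow> bij \<sigma> \<and>
     (\<forall>x y. \<sigma> (x + y) = \<sigma> x + \<sigma> y \<and> \<sigma> (x * y) = \<sigma> x * \<sigma> y)"

text \<open>The ambient field (UNIV) is a finite Galois extension of K with Galois group G
  (Artin's formulation: G is a finite group of automorphisms with fixed field K).\<close>
definition galois_with_group :: "('a::field \<Rightarrow> 'a) set \<Rightarrow> 'a set \<Rightarrow> bool" where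
  "galois_with_group G K \<longleftrightarrow> finite G \<and> id \<in> G \<and>
     (\<forall>\<sigma>\<in>G. field_automorphism \<sigma>) \<and> (\<forall>\<sigma>\<in>G. \<forall>\<rho>\<in>G. \<sigma> \<circ> \<rho> \<in> G) \<and>
     {x. \<forall>\<sigma>\<in>G. \<sigma> x = x} = K"

definition units_of_ring :: "'a::field set \<Rightarrow> 'a set" where
  "units_of_ring R = {x \<in> R. \<exists>y\<in>R. x * y = 1}"

text \<open>t-adic valuation of a nonzero element of T.\<close>
definition vt :: "'a::field set \<Rightarrow> 'a \<Rightarrow> 'a \<Rightarrow> nat" where
  "vt T t x = (GREATEST n. \<exists>y\<in>T. x = t ^ n * y)"

definition freemod :: "'a::field set \<Rightarrow> nat \<Rightarrow> (nat \<Rightarrow> 'a) set" where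
  "freemod T m = {\<eta>. (\<forall>j<m. \<eta> j \<in> T) \<and> (\<forall>j\<ge>m. \<eta> j = 0)}"

definition is_basis :: "'a::field set \<Rightarrow> nat \<Rightarrow> (nat \<Rightarrow> 'a) set \<Rightarrow> (nat \<Rightarrow> nat \<Rightarrow> 'a) \<Rightarrow> bool" where
  "is_basis T m M b \<longleftrightarrow> (\<forall>i<m. b i \<in> M) \<and>
     (\<forall>\<eta>\<in>M. \<exists>!a. (\<forall>i<m. a i \<in> T) \<and> (\<forall>i\<ge>m. a i = 0) \<and>
                  \<eta> = (\<lambda>j. \<Sum>i<m. a i * b i j))"

text \<open>e_0 \<le> ... \<le> e_{m-1} are the valuations of the elementary divisors of the
  inclusion of the (free, rank m) submodule M into T^m: there is a basis b of T^m such
  that t^{e_i} b_i form a basis of M.\<close>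
definition elem_div_vals :: "'a::field set \<Rightarrow> 'a \<Rightarrow> nat \<Rightarrow> (nat \<Rightarrow> 'a) set \<Rightarrow> (nat \<Rightarrow> nat) \<Rightarrow> bool" where
  "elem_div_vals T t m M e \<longleftrightarrow> (\<forall>i j. i \<le> j \<longrightarrow> j < m \<longrightarrow> e i \<le> e j) \<and>
     (\<exists>b. is_basis T m (freemod T m) b \<and> is_basis T m M (\<lambda>i j. t ^ e i * b i j))"

text \<open>Image of the Dedekind embedding T \<otimes>_S T \<rightarrow> \<Prod>_j T, x \<otimes> y \<mapsto> (x \<sigma>_j(y))_j;
  every element of T \<otimes>_S T is a finite sum of pure tensors.\<close>
definition dedekind_image :: "'a::field set \<Rightarrow> nat \<Rightarrow> (nat \<Rightarrow> 'a \<Rightarrow> 'a) \<Rightarrow> (nat \<Rightarrow> 'a) set" where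
  "dedekind_image T m \<sigma> = {\<eta>. \<exists>(n::nat) (x::nat \<Rightarrow> 'a) (y::nat \<Rightarrow> 'a). (\<forall>k<n. x k \<in> T \<and> y k \<in> T) \<and>
      (\<forall>j<m. \<eta> j = (\<Sum>k<n. x k * \<sigma> j (y k))) \<and> (\<forall>j\<ge>m. \<eta> j = 0)}"

definition minimally_ordered :: "'a::field set \<Rightarrow> 'a \<Rightarrow> nat \<Rightarrow> (nat \<Rightarrow> 'a) \<Rightarrow> bool" where
  "minimally_ordered T t m \<xi> \<longleftrightarrow> (\<forall>i<m. \<forall>j<m. i \<noteq> j \<longrightarrow> \<xi> i \<noteq> \<xi> j) \<and>
     (\<forall>j<m. \<forall>k. j < k \<and> k < m \<longrightarrow>
        (\<Sum>i<j. vt T t (\<xi> j - \<xi> i)) \<le> (\<Sum>i<j. vt T t (\<xi> k - \<xi> i)))"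

definition lagrange_coeff :: "(nat \<Rightarrow> 'a::field) \<Rightarrow> nat \<Rightarrow> nat \<Rightarrow> 'a" where
  "lagrange_coeff \<tau> j i = (\<Prod>k\<in>{..<i} - {j}. \<tau> i - \<tau> k) / (\<Prod>k\<in>{..<i} - {j}. \<tau> j - \<tau> k)"

end

theory Submission
  imports Defs "Jordan_Normal_Form.Determinant"
begin

text \<open>
  Put \<open>\<tau> j = \<sigma> j \<theta>\<close>. The vector \<open>newton i = (\<Prod>k<i. \<tau> j - \<tau> k)\<^sub>j\<close> is the image of
  \<open>\<Prod>k<i. 1 \<otimes> \<theta> - \<tau> k \<otimes> 1\<close> under the Dedekind embedding. Since \<open>T = S[\<theta>]\<close>, the image of
  the embedding is the \<open>T\<close>-span of the power vectors \<open>(\<tau> j ^ l)\<^sub>j\<close>; this span and the span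
  of the \<open>newton i\<close> both contain the constant vector \<open>1\<close> and are stable under multiplication
  by \<open>\<tau>\<close>, so they coincide. The \<open>newton i\<close> form an echelon family, hence a basis, and
  forward substitution combined with Lagrange interpolation shows that the \<open>i\<close>-th coordinate
  of \<open>\<eta>\<close> in this basis is \<open>(\<eta> i - (\<Sum>j<i. \<eta> j * lagrange_coeff \<tau> j i)) / newton i i\<close>, where
  \<open>v (newton i i) = \<phi> i\<close>; this is the description of the image. Minimal ordering gives
  \<open>v (newton i j) \<ge> \<phi> i\<close> for \<open>j \<ge> i\<close>, so the vectors \<open>newton i / t ^ \<phi> i\<close> are an echelon
  family with unit pivots, i.e. a basis of \<open>T\<^sup>m\<close>, and the \<open>\<phi> i\<close> are elementary divisors.
  They are the only ones: if \<open>e\<close> are sorted elementary divisors of \<open>M \<subseteq> T\<^sup>m\<close>, the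
  determinant of a basis of \<open>M + t ^ k T\<^sup>m\<close> has valuation \<open>\<Sum>i<m. min (e i) k\<close>, and these
  numbers for all \<open>k\<close> determine \<open>e\<close>.
\<close>

section \<open>Valuation rings\<close>

locale valuation_ring =
  fixes T :: "'a::field set" and v :: "'a \<Rightarrow> int"
  assumes v_mult: "\<And>x y. x \<noteq> 0 \<Longrightarrow> y \<noteq> 0 \<Longrightarrow> v (x * y) = v x + v y"
    and v_add: "\<And>x y. x \<noteq> 0 \<Longrightarrow> y \<noteq> 0 \<Longrightarrow> x + y \<noteq> 0 \<Longrightarrow> min (v x) (v y) \<le> v (x + y)"
    and T_eq: "T = {x. x = 0 \<or> 0 \<le> v x}"
begin

lemma v_one [simp]: "v 1 = 0"
  using v_mult[of 1 1] by simp

lemma v_inverse: "x \<noteq> 0 \<Longrightarrow> v (inverse x) = - v x"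
  using v_mult[of x "inverse x"] by simp

lemma v_uminus [simp]: "v (- x) = v x"
proof (cases "x = 0")
  case False
  have "v (-1) = 0"
    using v_mult[of "-1" "-1"] by simp
  then show ?thesis
    using v_mult[of "-1" x] False by simp
qed simp

lemma v_divide: "x \<noteq> 0 \<Longrightarrow> y \<noteq> 0 \<Longrightarrow> v (x / y) = v x - v y"
  using v_mult[of x "inverse y"] v_inverse[of y] by (simp add: divide_inverse)

lemma v_prod: "finite A \<Longrightarrow> (\<And>i. i \<in> A \<Longrightarrow> f i \<noteq> 0) \<Longrightarrow> v (prod f A) = (\<Sum>i\<in>A. v (f i))"
  by (induction A rule: finite_induct) (auto simp: v_mult)

lemma v_power: "x \<noteq> 0 \<Longrightarrow> v (x ^ n) = int n * v x"
  by (induction n) (auto simp: v_mult algebra_simps)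

lemma T_0 [simp]: "0 \<in> T" and T_1 [simp]: "1 \<in> T"
  by (auto simp: T_eq)

lemma T_mult [intro]: "x \<in> T \<Longrightarrow> y \<in> T \<Longrightarrow> x * y \<in> T"
  by (cases "x = 0"; cases "y = 0") (auto simp: T_eq v_mult)

lemma T_add [intro]: "x \<in> T \<Longrightarrow> y \<in> T \<Longrightarrow> x + y \<in> T"
  using v_add[of x y] by (cases "x = 0 \<or> y = 0 \<or> x + y = 0") (auto simp: T_eq)

lemma T_uminus [intro]: "x \<in> T \<Longrightarrow> - x \<in> T"
  by (auto simp: T_eq)

lemma T_diff [intro]: "x \<in> T \<Longrightarrow> y \<in> T \<Longrightarrow> x - y \<in> T"
  using T_add[of x "- y"] by auto

lemma T_sum [intro]: "(\<And>i. i \<in> A \<Longrightarrow> f i \<in> T) \<Longrightarrow> sum f A \<in> T"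
  by (induction A rule: infinite_finite_induct) auto

lemma T_prod [intro]: "(\<And>i. i \<in> A \<Longrightarrow> f i \<in> T) \<Longrightarrow> prod f A \<in> T"
  by (induction A rule: infinite_finite_induct) auto

lemma T_power [intro]: "x \<in> T \<Longrightarrow> x ^ n \<in> T"
  by (induction n) auto

lemma inverse_in_T: "x \<noteq> 0 \<Longrightarrow> v x = 0 \<Longrightarrow> inverse x \<in> T"
  by (auto simp: T_eq v_inverse)

lemma units_of_ring_iff: "x \<in> units_of_ring T \<longleftrightarrow> x \<noteq> 0 \<and> v x = 0"
proof
  assume "x \<in> units_of_ring T"
  then obtain y where y: "x \<in> T" "y \<in> T" "x * y = 1"
    by (auto simp: units_of_ring_def)
  then have "x \<noteq> 0" "y \<noteq> 0"
    by auto
  then have "v x + v y = 0"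
    using v_mult[of x y] y(3) by simp
  then show "x \<noteq> 0 \<and> v x = 0"
    using y by (auto simp: T_eq)
next
  assume "x \<noteq> 0 \<and> v x = 0"
  then show "x \<in> units_of_ring T"
    using inverse_in_T[of x] by (auto simp: units_of_ring_def T_eq intro!: bexI[of _ "inverse x"])
qed

end

lemma is_dvr_valuation_ring:
  assumes "is_dvr UNIV T"
  obtains v where "valuation_ring T v" "\<exists>x. x \<noteq> 0 \<and> v x = 1"
  using assms unfolding is_dvr_def discrete_valuation_def valuation_ring_def by auto

locale dvr = valuation_ring +
  fixes t :: "'a::field"
  assumes t_nonzero: "t \<noteq> 0" and v_t: "v t = 1"
begin

lemma t_in_T [simp]: "t \<in> T"
  using v_t by (simp add: T_eq)

lemma v_t_power [simp]: "v (t ^ n) = int n"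
  using v_power[OF t_nonzero] v_t by simp

lemma t_power_dvd_iff: "(\<exists>y\<in>T. x = t ^ n * y) \<longleftrightarrow> x = 0 \<or> int n \<le> v x"
proof
  assume "\<exists>y\<in>T. x = t ^ n * y"
  then obtain y where "y \<in> T" "x = t ^ n * y"
    by auto
  then show "x = 0 \<or> int n \<le> v x"
    using t_nonzero by (cases "y = 0") (auto simp: v_mult T_eq)
next
  assume x: "x = 0 \<or> int n \<le> v x"
  show "\<exists>y\<in>T. x = t ^ n * y"
  proof (cases "x = 0")
    case False
    then have "x / t ^ n \<in> T"
      using x t_nonzero by (auto simp: T_eq v_divide)
    then show ?thesis
      using t_nonzero by (intro bexI[of _ "x / t ^ n"]) auto
  qed auto
qed

lemma vt_eq_v: "x \<noteq> 0 \<Longrightarrow> x \<in> T \<Longrightarrow> int (vt T t x) = v x"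
  unfolding vt_def
proof (subst Greatest_equality)
  assume "x \<noteq> 0" "x \<in> T"
  then show "\<exists>y\<in>T. x = t ^ nat (v x) * y"
    by (subst t_power_dvd_iff) (auto simp: T_eq)
  show "n \<le> nat (v x)" if "\<exists>y\<in>T. x = t ^ n * y" for n
    using that \<open>x \<noteq> 0\<close> by (subst (asm) t_power_dvd_iff) auto
  show "int (nat (v x)) = v x"
    using \<open>x \<noteq> 0\<close> \<open>x \<in> T\<close> by (auto simp: T_eq)
qed

end

lemma (in valuation_ring) dvr_if_generates_maximal_ideal:
  assumes t: "t \<in> T" "{t * y | y. y \<in> T} = T - units_of_ring T"
    and x: "x \<noteq> 0" "v x = 1"
  shows "dvr T v t"
proof
  have "x \<in> T - units_of_ring T"
    using x units_of_ring_iff[of x] by (simp add: T_eq)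
  then obtain y where y: "y \<in> T" "x = t * y"
    using t(2) by blast
  then show "t \<noteq> 0"
    using x by auto
  have "t \<in> {t * y | y. y \<in> T}"
    by (auto intro!: exI[of _ 1])
  then have "v t \<noteq> 0"
    using t \<open>t \<noteq> 0\<close> by (auto simp: units_of_ring_iff)
  moreover have "y \<noteq> 0" "v t + v y = 1"
    using x y \<open>t \<noteq> 0\<close> v_mult[of t y] by auto
  ultimately show "v t = 1"
    using t(1) y(1) \<open>t \<noteq> 0\<close> by (auto simp: T_eq)
qed

section \<open>Echelon families of vectors\<close>

definition echelon :: "nat \<Rightarrow> (nat \<Rightarrow> nat \<Rightarrow> 'a::field) \<Rightarrow> bool" where
  "echelon m c \<longleftrightarrow> (\<forall>i<m. c i i \<noteq> 0) \<and> (\<forall>i j. j < i \<longrightarrow> c i j = 0)"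

lemma echelon_coeffs_unique:
  assumes c: "echelon m c"
    and eq: "\<And>j. j < m \<Longrightarrow> (\<Sum>i<m. a i * c i j) = (\<Sum>i<m. a' i * c i j)"
  shows "i < m \<Longrightarrow> a i = a' i"
proof (induction i rule: less_induct)
  case (less i)
  have "(\<Sum>l\<in>{..<m} - {i}. (a l - a' l) * c l i) = 0"
  proof (rule sum.neutral, rule ballI)
    show "(a l - a' l) * c l i = 0" if "l \<in> {..<m} - {i}" for l
      using that less.IH[of l] c by (cases "l < i") (auto simp: echelon_def)
  qed
  moreover have "(\<Sum>l<m. (a l - a' l) * c l i) = 0"
    using eq[OF less.prems] by (simp add: algebra_simps sum_subtractf)
  ultimately have "(a i - a' i) * c i i = 0"
    using sum.remove[of "{..<m}" i "\<lambda>l. (a l - a' l) * c l i"] less.prems by simp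
  then show ?case
    using c less.prems by (simp add: echelon_def)
qed

lemma echelon_solve:
  assumes c: "echelon m c"
  obtains a where "\<And>j. j < m \<Longrightarrow> \<eta> j = (\<Sum>i<m. a i * c i j)"
proof -
  have "\<exists>a. \<forall>j<n. \<eta> j = (\<Sum>i<n. a i * c i j)" if "n \<le> m" for n
    using that
  proof (induction n)
    case (Suc n)
    then obtain a where a: "\<forall>j<n. \<eta> j = (\<Sum>i<n. a i * c i j)"
      by auto
    define x where "x = (\<eta> n - (\<Sum>i<n. a i * c i n)) / c n n"
    have sum_eq: "(\<Sum>i<Suc n. (a(n := x)) i * c i j) = (\<Sum>i<n. a i * c i j) + x * c n j" for j
      by (simp add: sum.cong[of "{..<n}" "{..<n}" "\<lambda>i. (a(n := x)) i * c i j"])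
    have "c n n \<noteq> 0" "\<forall>j<n. c n j = 0"
      using c Suc.prems by (auto simp: echelon_def)
    then have "\<forall>j<Suc n. \<eta> j = (\<Sum>i<Suc n. (a(n := x)) i * c i j)"
      using a by (auto simp: sum_eq less_Suc_eq x_def)
    then show ?case
      by blast
  qed auto
  then show ?thesis
    using that by blast
qed

lemma echelon_pivot_eq:
  assumes c: "echelon m c" and i: "i < m" and \<eta>: "\<eta> i = (\<Sum>l<m. a l * c l i)"
  shows "a i * c i i = \<eta> i - (\<Sum>l<i. a l * c l i)"
proof -
  have "(\<Sum>l<m. a l * c l i) = (\<Sum>l<Suc i. a l * c l i)"
    using c i by (intro sum.mono_neutral_right) (auto simp: echelon_def)
  then show ?thesis
    using \<eta> by simp
qed

definition lin_span :: "'a::field set \<Rightarrow> nat \<Rightarrow> (nat \<Rightarrow> nat \<Rightarrow> 'a) \<Rightarrow> (nat \<Rightarrow> 'a) set" where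
  "lin_span T m b = {\<eta>. \<exists>a. (\<forall>i<m. a i \<in> T) \<and> \<eta> = (\<lambda>j. \<Sum>i<m. a i * b i j)}"

definition is_submodule :: "'a::field set \<Rightarrow> (nat \<Rightarrow> 'a) set \<Rightarrow> bool" where
  "is_submodule T M \<longleftrightarrow> (\<lambda>_. 0) \<in> M \<and> (\<forall>x\<in>M. \<forall>y\<in>M. (\<lambda>j. x j + y j) \<in> M) \<and>
     (\<forall>c\<in>T. \<forall>x\<in>M. (\<lambda>j. c * x j) \<in> M)"

lemma submodule_zero: "is_submodule T M \<Longrightarrow> (\<lambda>_. 0) \<in> M"
  by (simp add: is_submodule_def)

lemma submodule_add: "is_submodule T M \<Longrightarrow> x \<in> M \<Longrightarrow> y \<in> M \<Longrightarrow> (\<lambda>j. x j + y j) \<in> M"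
  by (simp add: is_submodule_def)

lemma submodule_smult: "is_submodule T M \<Longrightarrow> c \<in> T \<Longrightarrow> x \<in> M \<Longrightarrow> (\<lambda>j. c * x j) \<in> M"
  by (simp add: is_submodule_def)

lemma submodule_sum:
  fixes n :: nat
  assumes M: "is_submodule T M" and f: "\<And>k. k < n \<Longrightarrow> f k \<in> M"
  shows "(\<lambda>j. \<Sum>k<n. f k j) \<in> M"
  using f
proof (induction n arbitrary: f)
  case (Suc n)
  then show ?case
    using submodule_add[OF M, of "\<lambda>j. \<Sum>k<n. f k j" "f n"] by simp
qed (simp add: submodule_zero[OF M])

lemma submodule_lincomb:
  fixes n :: nat
  assumes M: "is_submodule T M" and "\<And>k. k < n \<Longrightarrow> a k \<in> T" "\<And>k. k < n \<Longrightarrow> b k \<in> M"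
  shows "(\<lambda>j. \<Sum>k<n. a k * b k j) \<in> M"
  using assms by (intro submodule_sum[OF M] submodule_smult[OF M]) auto

lemma lin_span_subset:
  assumes M: "is_submodule T M" and b: "\<And>i. i < m \<Longrightarrow> b i \<in> M"
  shows "lin_span T m b \<subseteq> M"
proof
  fix \<eta> assume "\<eta> \<in> lin_span T m b"
  then obtain a where "\<forall>i<m. a i \<in> T" "\<eta> = (\<lambda>j. \<Sum>i<m. a i * b i j)"
    by (auto simp: lin_span_def)
  then show "\<eta> \<in> M"
    using submodule_lincomb[OF M, of m a b] b by simp
qed

lemma is_basis_mem: "is_basis T m N b \<Longrightarrow> i < m \<Longrightarrow> b i \<in> N"
  by (simp add: is_basis_def)

lemma is_basis_coeffs:
  assumes "is_basis T m N b" "\<eta> \<in> N"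
  obtains a where "\<forall>i<m. a i \<in> T" "\<forall>i\<ge>m. a i = 0" "\<eta> = (\<lambda>j. \<Sum>i<m. a i * b i j)"
  using assms unfolding is_basis_def by blast

lemma is_basis_coeffs_eq:
  assumes "is_basis T m N b" "(\<lambda>j. \<Sum>i<m. a i * b i j) \<in> N"
    and "\<forall>i<m. a i \<in> T" "\<forall>i\<ge>m. a i = 0" "\<forall>i<m. a' i \<in> T" "\<forall>i\<ge>m. a' i = 0"
    and "(\<lambda>j. \<Sum>i<m. a i * b i j) = (\<lambda>j. \<Sum>i<m. a' i * b i j)"
  shows "a = a'"
proof -
  let ?P = "\<lambda>a'. (\<forall>i<m. a' i \<in> T) \<and> (\<forall>i\<ge>m. a' i = 0) \<and>
    (\<lambda>j. \<Sum>i<m. a i * b i j) = (\<lambda>j. \<Sum>i<m. a' i * b i j)"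
  have ex1: "\<exists>!a. ?P a"
    using assms(1,2) unfolding is_basis_def by blast
  have "(THE x. ?P x) = a" "(THE x. ?P x) = a'"
    by (rule the1_equality[OF ex1]; use assms(3-) in simp)+
  then show ?thesis
    by simp
qed

lemma is_basisI:
  assumes mem: "\<And>i. i < m \<Longrightarrow> c i \<in> N"
    and span: "\<And>\<eta>. \<eta> \<in> N \<Longrightarrow> \<exists>a. (\<forall>i<m. a i \<in> T) \<and> \<eta> = (\<lambda>j. \<Sum>i<m. a i * c i j)"
    and indep: "\<And>a a' i. \<forall>i<m. a i \<in> T \<Longrightarrow> \<forall>i<m. a' i \<in> T \<Longrightarrow>
      (\<lambda>j. \<Sum>i<m. a i * c i j) = (\<lambda>j. \<Sum>i<m. a' i * c i j) \<Longrightarrow> i < m \<Longrightarrow> a i = a' i"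
  shows "is_basis T m N c"
  unfolding is_basis_def
proof (intro conjI allI impI ballI mem)
  fix \<eta> assume "\<eta> \<in> N"
  then obtain a where a: "\<forall>i<m. a i \<in> T" "\<eta> = (\<lambda>j. \<Sum>i<m. a i * c i j)"
    using span by blast
  let ?P = "\<lambda>a. (\<forall>i<m. a i \<in> T) \<and> (\<forall>i\<ge>m. a i = 0) \<and> \<eta> = (\<lambda>j. \<Sum>i<m. a i * c i j)"
  let ?a = "\<lambda>i. if i < m then a i else 0"
  show "\<exists>!a. ?P a"
  proof (rule ex1I[of ?P ?a])
    show "?P ?a"
      using a by auto
    show "a' = ?a" if a': "?P a'" for a'
    proof
      show "a' i = ?a i" for i
        using indep[of a' a i] a a' by (cases "i < m") auto
    qed
  qed
qed

context valuation_ring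
begin

lemma is_submodule_lin_span: "is_submodule T (lin_span T m b)"
proof -
  have "(\<lambda>_. 0) \<in> lin_span T m b"
    by (auto simp: lin_span_def intro!: exI[of _ "\<lambda>_. 0"])
  moreover have "(\<lambda>j. x j + y j) \<in> lin_span T m b"
    if x: "x \<in> lin_span T m b" and y: "y \<in> lin_span T m b" for x y
  proof -
    obtain a where "\<forall>i<m. a i \<in> T" "x = (\<lambda>j. \<Sum>i<m. a i * b i j)"
      using x by (auto simp: lin_span_def)
    moreover obtain a' where "\<forall>i<m. a' i \<in> T" "y = (\<lambda>j. \<Sum>i<m. a' i * b i j)"
      using y by (auto simp: lin_span_def)
    ultimately show ?thesis
      unfolding lin_span_def
      by (intro CollectI exI[of _ "\<lambda>i. a i + a' i"]) (auto simp: sum.distrib distrib_right)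
  qed
  moreover have "(\<lambda>j. c * x j) \<in> lin_span T m b" if "c \<in> T" and x: "x \<in> lin_span T m b" for c x
  proof -
    obtain a where "\<forall>i<m. a i \<in> T" "x = (\<lambda>j. \<Sum>i<m. a i * b i j)"
      using x by (auto simp: lin_span_def)
    then show ?thesis
      unfolding lin_span_def using \<open>c \<in> T\<close>
      by (intro CollectI exI[of _ "\<lambda>i. c * a i"]) (auto simp: sum_distrib_left mult.assoc)
  qed
  ultimately show ?thesis
    by (simp add: is_submodule_def)
qed

lemma is_submodule_freemod: "is_submodule T (freemod T m)"
  by (auto simp: is_submodule_def freemod_def)

lemma in_lin_span: "i < m \<Longrightarrow> b i \<in> lin_span T m b"
  unfolding lin_span_def
proof (intro CollectI exI[of _ "\<lambda>l. if l = i then 1 else 0"] conjI allI impI ext)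
  fix j assume "i < m"
  have "(\<Sum>l<m. (if l = i then 1 else 0) * b l j) = (\<Sum>l<m. if l = i then b l j else 0)"
    by (intro sum.cong) auto
  then show "b i j = (\<Sum>l<m. (if l = i then 1 else 0) * b l j)"
    using \<open>i < m\<close> by simp
qed auto

lemma mem_lin_span_echelon_iff:
  assumes c: "echelon m c" and c_high: "\<And>i j. i < m \<Longrightarrow> m \<le> j \<Longrightarrow> c i j = 0"
    and \<eta>_high: "\<And>j. m \<le> j \<Longrightarrow> \<eta> j = 0" and a: "\<And>j. j < m \<Longrightarrow> \<eta> j = (\<Sum>i<m. a i * c i j)"
  shows "\<eta> \<in> lin_span T m c \<longleftrightarrow> (\<forall>i<m. a i \<in> T)"
proof
  assume "\<eta> \<in> lin_span T m c"
  then obtain a' where a': "\<forall>i<m. a' i \<in> T" "\<eta> = (\<lambda>j. \<Sum>i<m. a' i * c i j)"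
    by (auto simp: lin_span_def)
  have "a i = a' i" if "i < m" for i
    using echelon_coeffs_unique[OF c, of a a' i] a a'(2) that by simp
  then show "\<forall>i<m. a i \<in> T"
    using a'(1) by simp
next
  assume "\<forall>i<m. a i \<in> T"
  moreover have "\<eta> = (\<lambda>j. \<Sum>i<m. a i * c i j)"
  proof
    show "\<eta> j = (\<Sum>i<m. a i * c i j)" for j
      using a[of j] \<eta>_high[of j] c_high[of _ j] by (cases "j < m") auto
  qed
  ultimately show "\<eta> \<in> lin_span T m c"
    by (auto simp: lin_span_def)
qed

lemma is_basis_lin_span_echelon:
  assumes c: "echelon m c"
  shows "is_basis T m (lin_span T m c) c"
proof (rule is_basisI)
  show "c i \<in> lin_span T m c" if "i < m" for i
    using that by (rule in_lin_span)
  show "\<And>a a' i. (\<lambda>j. \<Sum>i<m. a i * c i j) = (\<lambda>j. \<Sum>i<m. a' i * c i j) \<Longrightarrow> i < m \<Longrightarrow> a i = a' i"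
    using echelon_coeffs_unique[OF c] by (simp add: fun_eq_iff)
qed (auto simp: lin_span_def)

lemma freemod_eq_lin_span_echelon:
  assumes c: "echelon m c" and c_unit: "\<And>i. i < m \<Longrightarrow> v (c i i) = 0"
    and c_T: "\<And>i j. i < m \<Longrightarrow> j < m \<Longrightarrow> c i j \<in> T"
    and c_high: "\<And>i j. i < m \<Longrightarrow> m \<le> j \<Longrightarrow> c i j = 0"
  shows "freemod T m = lin_span T m c"
proof
  show "lin_span T m c \<subseteq> freemod T m"
    using c_high by (auto simp: lin_span_def freemod_def intro!: T_sum T_mult c_T)
  show "freemod T m \<subseteq> lin_span T m c"
  proof
    fix \<eta> assume \<eta>: "\<eta> \<in> freemod T m"
    obtain a where a: "\<And>j. j < m \<Longrightarrow> \<eta> j = (\<Sum>i<m. a i * c i j)"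
      by (rule echelon_solve[OF c, where \<eta> = \<eta>]) blast
    have "a i \<in> T" if "i < m" for i
      using that
    proof (induction i rule: less_induct)
      case (less i)
      have "a i = (\<eta> i - (\<Sum>l<i. a l * c l i)) * inverse (c i i)"
        using echelon_pivot_eq[OF c less.prems, of \<eta> a] a[OF less.prems] c less.prems
        by (simp add: echelon_def field_simps)
      also have "\<dots> \<in> T"
        using less \<eta> c c_unit
        by (intro T_mult T_diff T_sum inverse_in_T c_T) (auto simp: freemod_def echelon_def)
      finally show ?case .
    qed
    then show "\<eta> \<in> lin_span T m c"
      using mem_lin_span_echelon_iff[OF c c_high _ a] \<eta> by (auto simp: freemod_def)
  qed
qed

end

section \<open>Uniqueness of elementary divisors\<close>

lemma sum_min_Suc:
  fixes e :: "nat \<Rightarrow> nat"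
  shows "(\<Sum>i<m. min (e i) (Suc k)) = (\<Sum>i<m. min (e i) k) + card {i. i < m \<and> k < e i}"
proof -
  have "(\<Sum>i<m. min (e i) (Suc k)) = (\<Sum>i<m. min (e i) k + (if k < e i then 1 else 0))"
    by (rule sum.cong) auto
  also have "\<dots> = (\<Sum>i<m. min (e i) k) + card {i. i < m \<and> k < e i}"
    by (simp add: sum.distrib sum.If_cases lessThan_def Collect_conj_eq[symmetric])
  finally show ?thesis .
qed

lemma sorted_less_iff_card:
  fixes e :: "nat \<Rightarrow> nat"
  assumes e: "\<forall>i j. i \<le> j \<longrightarrow> j < m \<longrightarrow> e i \<le> e j" and i: "i < m"
  shows "k < e i \<longleftrightarrow> m - i \<le> card {i'. i' < m \<and> k < e i'}"
proof
  assume "k < e i"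
  have "{i..<m} \<subseteq> {i'. i' < m \<and> k < e i'}"
  proof
    fix i' assume "i' \<in> {i..<m}"
    then have "i' < m" "e i \<le> e i'"
      using e by auto
    then show "i' \<in> {i'. i' < m \<and> k < e i'}"
      using \<open>k < e i\<close> by simp
  qed
  then show "m - i \<le> card {i'. i' < m \<and> k < e i'}"
    using card_mono[of "{i'. i' < m \<and> k < e i'}" "{i..<m}"] by simp
next
  assume card: "m - i \<le> card {i'. i' < m \<and> k < e i'}"
  show "k < e i"
  proof (rule ccontr)
    assume "\<not> k < e i"
    have "{i'. i' < m \<and> k < e i'} \<subseteq> {Suc i..<m}"
    proof
      fix i' assume i': "i' \<in> {i'. i' < m \<and> k < e i'}"
      have "\<not> i' \<le> i"
      proof
        assume "i' \<le> i"
        then have "e i' \<le> e i"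
          using e i by blast
        then show False
          using i' \<open>\<not> k < e i\<close> by simp
      qed
      then show "i' \<in> {Suc i..<m}"
        using i' by simp
    qed
    then show False
      using card card_mono[of "{Suc i..<m}" "{i'. i' < m \<and> k < e i'}"] i by simp
  qed
qed

lemma sorted_eq_of_sum_min_eq:
  fixes e f :: "nat \<Rightarrow> nat"
  assumes e: "\<forall>i j. i \<le> j \<longrightarrow> j < m \<longrightarrow> e i \<le> e j"
    and f: "\<forall>i j. i \<le> j \<longrightarrow> j < m \<longrightarrow> f i \<le> f j"
    and eq: "\<And>k. (\<Sum>i<m. min (e i) k) = (\<Sum>i<m. min (f i) k)"
    and i: "i < m"
  shows "e i = f i"
proof -
  have "card {i. i < m \<and> k < e i} = card {i. i < m \<and> k < f i}" for k
    using sum_min_Suc[of e k m] sum_min_Suc[of f k m] eq[of k] eq[of "Suc k"] by simp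
  then have "k < e i \<longleftrightarrow> k < f i" for k
    using sorted_less_iff_card[OF e i, of k] sorted_less_iff_card[OF f i, of k] by simp
  then show ?thesis
    by (meson less_irrefl nat_neq_iff)
qed

definition basis_mat :: "nat \<Rightarrow> (nat \<Rightarrow> nat \<Rightarrow> 'a) \<Rightarrow> 'a mat" where
  "basis_mat m b = mat m m (\<lambda>(i, j). b i j)"

lemma basis_mat_carrier [simp]: "basis_mat m b \<in> carrier_mat m m"
  by (simp add: basis_mat_def)

lemma det_basis_mat_scale:
  fixes x :: "'a::comm_ring_1"
  shows "det (basis_mat m (\<lambda>i j. x ^ f i * b i j)) = x ^ (\<Sum>i<m. f i) * det (basis_mat m b)"
proof -
  have "(\<Prod>i=0..<m. basis_mat m (\<lambda>i j. x ^ f i * b i j) $$ (i, p i)) =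
      x ^ (\<Sum>i<m. f i) * (\<Prod>i=0..<m. basis_mat m b $$ (i, p i))" if "p permutes {0..<m}" for p
  proof -
    have "(\<Prod>i=0..<m. basis_mat m (\<lambda>i j. x ^ f i * b i j) $$ (i, p i)) =
        (\<Prod>i=0..<m. x ^ f i * basis_mat m b $$ (i, p i))"
      using that by (intro prod.cong) (auto simp: basis_mat_def dest: permutes_in_image)
    then show ?thesis
      by (simp add: prod.distrib power_sum atLeast0LessThan)
  qed
  then have "det (basis_mat m (\<lambda>i j. x ^ f i * b i j)) =
      (\<Sum>p | p permutes {0..<m}. x ^ (\<Sum>i<m. f i) * (signof p * (\<Prod>i=0..<m. basis_mat m b $$ (i, p i))))"
    by (subst det_def'[of _ m]) (auto intro!: sum.cong simp: mult.left_commute)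
  then show ?thesis
    by (simp add: det_def'[of _ m] sum_distrib_left)
qed

context valuation_ring
begin

lemma det_basis_mat_in_T:
  assumes "\<And>i j. i < m \<Longrightarrow> j < m \<Longrightarrow> A i j \<in> T"
  shows "det (basis_mat m A) \<in> T"
proof -
  have "basis_mat m A $$ (i, p i) \<in> T" if "p permutes {0..<m}" "i < m" for p i
    using that assms by (auto simp: basis_mat_def dest: permutes_in_image)
  then show ?thesis
    by (subst det_def'[of _ m]) (auto simp: sign_def T_uminus intro!: T_sum T_mult T_prod)
qed

lemma det_basis_mat_change:
  assumes c: "is_basis T m N c" and c': "\<And>i. i < m \<Longrightarrow> c' i \<in> N"
  obtains d where "d \<in> T" "det (basis_mat m c') = d * det (basis_mat m c)"
proof -
  have "\<forall>i. \<exists>a. i < m \<longrightarrow> (\<forall>l<m. a l \<in> T) \<and> c' i = (\<lambda>j. \<Sum>l<m. a l * c l j)"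
    using is_basis_coeffs[OF c c'] by blast
  then obtain A where A: "\<And>i. i < m \<Longrightarrow> (\<forall>l<m. A i l \<in> T) \<and> c' i = (\<lambda>j. \<Sum>l<m. A i l * c l j)"
    by metis
  have "basis_mat m c' = basis_mat m A * basis_mat m c"
  proof (rule eq_matI)
    fix i j assume "i < dim_row (basis_mat m A * basis_mat m c)" "j < dim_col (basis_mat m A * basis_mat m c)"
    then have ij: "i < m" "j < m"
      by (auto simp: basis_mat_def)
    then show "basis_mat m c' $$ (i, j) = (basis_mat m A * basis_mat m c) $$ (i, j)"
      using A[OF ij(1)] by (simp add: basis_mat_def scalar_prod_def atLeast0LessThan)
  qed (auto simp: basis_mat_def)
  then have "det (basis_mat m c') = det (basis_mat m A) * det (basis_mat m c)"
    by (simp add: det_mult[of _ m])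
  moreover have "det (basis_mat m A) \<in> T"
    using A by (intro det_basis_mat_in_T) auto
  ultimately show ?thesis
    using that by simp
qed

lemma v_det_basis_mat_eq:
  assumes c: "is_basis T m N c" and c': "is_basis T m N c'" and nz: "det (basis_mat m c) \<noteq> 0"
  shows "det (basis_mat m c') \<noteq> 0" "v (det (basis_mat m c')) = v (det (basis_mat m c))"
proof -
  obtain d1 where d1: "d1 \<in> T" "det (basis_mat m c') = d1 * det (basis_mat m c)"
    by (rule det_basis_mat_change[OF c is_basis_mem[OF c']])
  obtain d2 where d2: "d2 \<in> T" "det (basis_mat m c) = d2 * det (basis_mat m c')"
    by (rule det_basis_mat_change[OF c' is_basis_mem[OF c]])
  show nz': "det (basis_mat m c') \<noteq> 0"
    using d2(2) nz by (metis mult_zero_right)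
  have d_nz: "d1 \<noteq> 0" "d2 \<noteq> 0"
    using d1(2) d2(2) nz nz' by (metis mult_zero_left)+
  have "v (det (basis_mat m c')) = v d1 + v (det (basis_mat m c))"
    unfolding d1(2) using d_nz(1) nz by (rule v_mult)
  moreover have "v (det (basis_mat m c)) = v d2 + v (det (basis_mat m c'))"
    unfolding d2(2) using d_nz(2) nz' by (rule v_mult)
  moreover have "0 \<le> v d1" "0 \<le> v d2"
    using d1(1) d2(1) d_nz by (auto simp: T_eq)
  ultimately show "v (det (basis_mat m c')) = v (det (basis_mat m c))"
    by linarith
qed

lemma is_basis_freemod_unit_vectors: "is_basis T m (freemod T m) (\<lambda>i j. if i = j then 1 else 0)"
proof -
  have "echelon m (\<lambda>i j. if i = j then 1 else 0)"
    by (simp add: echelon_def)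
  moreover have "freemod T m = lin_span T m (\<lambda>i j. if i = j then 1 else 0)"
    by (rule freemod_eq_lin_span_echelon) (auto simp: echelon_def)
  ultimately show ?thesis
    using is_basis_lin_span_echelon by simp
qed

lemma det_basis_freemod:
  assumes "is_basis T m (freemod T m) b"
  shows "det (basis_mat m b) \<noteq> 0" "v (det (basis_mat m b)) = 0"
proof -
  have "basis_mat m (\<lambda>i j. if i = j then (1::'a) else 0) = 1\<^sub>m m"
    by (rule eq_matI) (auto simp: basis_mat_def)
  then have "det (basis_mat m (\<lambda>i j. if i = j then (1::'a) else 0)) = 1"
    by (simp only: det_one)
  with v_det_basis_mat_eq[OF is_basis_freemod_unit_vectors assms]
  show "det (basis_mat m b) \<noteq> 0" "v (det (basis_mat m b)) = 0"
    by (simp_all only: v_one one_neq_zero not_False_eq_True)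
qed

end

context dvr
begin

lemma t_power_scaled_coeffs_eq:
  assumes b: "is_basis T m (freemod T m) b" and a: "\<forall>i<m. a i \<in> T" "\<forall>i<m. a' i \<in> T"
    and eq: "(\<lambda>j. \<Sum>i<m. a i * (t ^ g i * b i j)) = (\<lambda>j. \<Sum>i<m. a' i * (t ^ g i * b i j))"
    and i: "i < m"
  shows "a i = a' i"
proof -
  define scaled where "scaled a i = (if i < m then a i * t ^ g i else 0)" for a i
  have scaled_sum: "(\<lambda>j. \<Sum>i<m. scaled a i * b i j) = (\<lambda>j. \<Sum>i<m. a i * (t ^ g i * b i j))" for a
    by (simp add: scaled_def mult.assoc)
  have "(\<lambda>j. \<Sum>i<m. scaled a i * b i j) \<in> freemod T m"
    using a(1) is_basis_mem[OF b]
    by (intro submodule_lincomb[OF is_submodule_freemod]) (auto simp: scaled_def intro!: T_mult T_power)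
  moreover have "\<forall>i<m. scaled a i \<in> T" "\<forall>i<m. scaled a' i \<in> T"
    and "\<forall>i\<ge>m. scaled a i = 0" "\<forall>i\<ge>m. scaled a' i = 0"
    using a by (auto simp: scaled_def intro!: T_mult T_power)
  ultimately have "scaled a = scaled a'"
    using is_basis_coeffs_eq[OF b] eq by (simp only: scaled_sum)
  then have "scaled a i = scaled a' i"
    by simp
  then have "a i * t ^ g i = a' i * t ^ g i"
    using i by (simp only: scaled_def if_True)
  then show ?thesis
    using t_nonzero by simp
qed

lemma is_basis_add_t_power_freemod:
  assumes b: "is_basis T m (freemod T m) b" and M: "is_basis T m M (\<lambda>i j. t ^ e i * b i j)"
    and M0: "(\<lambda>_. 0) \<in> M"
  shows "is_basis T m {\<lambda>j. x j + t ^ k * y j | x y. x \<in> M \<and> y \<in> freemod T m}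
           (\<lambda>i j. t ^ min (e i) k * b i j)"
proof (rule is_basisI)
  show "(\<lambda>j. t ^ min (e i) k * b i j) \<in> {\<lambda>j. x j + t ^ k * y j | x y. x \<in> M \<and> y \<in> freemod T m}"
    if i: "i < m" for i
  proof (cases "e i \<le> k")
    case True
    then show ?thesis
      using is_basis_mem[OF M i]
      by (intro CollectI exI[of _ "\<lambda>j. t ^ e i * b i j"] exI[of _ "\<lambda>_. 0"]) (auto simp: freemod_def)
  next
    case False
    then show ?thesis
      using M0 is_basis_mem[OF b i] by (intro CollectI exI[of _ "\<lambda>_. 0"] exI[of _ "b i"]) auto
  qed
  show "\<exists>d. (\<forall>i<m. d i \<in> T) \<and> \<eta> = (\<lambda>j. \<Sum>i<m. d i * (t ^ min (e i) k * b i j))"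
    if \<eta>: "\<eta> \<in> {\<lambda>j. x j + t ^ k * y j | x y. x \<in> M \<and> y \<in> freemod T m}" for \<eta>
  proof -
    obtain x y where xy: "\<eta> = (\<lambda>j. x j + t ^ k * y j)" "x \<in> M" "y \<in> freemod T m"
      using \<eta> by blast
    obtain a where a: "\<forall>i<m. a i \<in> T" "x = (\<lambda>j. \<Sum>i<m. a i * (t ^ e i * b i j))"
      using is_basis_coeffs[OF M xy(2)] by blast
    obtain c where c: "\<forall>i<m. c i \<in> T" "y = (\<lambda>j. \<Sum>i<m. c i * b i j)"
      using is_basis_coeffs[OF b xy(3)] by blast
    define d where "d i = a i * t ^ (e i - k) + t ^ (k - e i) * c i" for i
    have "t ^ e i = t ^ (e i - k) * t ^ min (e i) k" "t ^ k = t ^ (k - e i) * t ^ min (e i) k" for i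
      by (simp_all add: min_def flip: power_add)
    then have "a i * (t ^ e i * b i j) + t ^ k * (c i * b i j) = d i * (t ^ min (e i) k * b i j)" for i j
      unfolding d_def by (simp add: algebra_simps)
    then have "\<eta> = (\<lambda>j. \<Sum>i<m. d i * (t ^ min (e i) k * b i j))"
      unfolding xy(1) a(2) c(2) by (simp add: sum_distrib_left flip: sum.distrib)
    moreover have "\<forall>i<m. d i \<in> T"
      using a(1) c(1) by (auto simp: d_def intro!: T_add T_mult T_power)
    ultimately show ?thesis
      by blast
  qed
next
  show "a i = a' i"
    if "\<forall>i<m. a i \<in> T" "\<forall>i<m. a' i \<in> T" "i < m"
      and "(\<lambda>j. \<Sum>i<m. a i * (t ^ min (e i) k * b i j)) = (\<lambda>j. \<Sum>i<m. a' i * (t ^ min (e i) k * b i j))"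
    for a a' i
    using t_power_scaled_coeffs_eq[OF b that(1,2,4,3)] .
qed

lemma det_t_power_scaled_basis:
  assumes "is_basis T m (freemod T m) b"
  shows "det (basis_mat m (\<lambda>i j. t ^ g i * b i j)) \<noteq> 0"
    "v (det (basis_mat m (\<lambda>i j. t ^ g i * b i j))) = int (\<Sum>i<m. g i)"
  using det_basis_freemod[OF assms] t_nonzero
  by (simp_all add: det_basis_mat_scale v_mult del: of_nat_sum)

lemma elem_div_vals_unique:
  assumes e: "elem_div_vals T t m M e" and f: "elem_div_vals T t m M f"
    and M0: "(\<lambda>_. 0) \<in> M" and i: "i < m"
  shows "e i = f i"
proof -
  obtain b where b: "is_basis T m (freemod T m) b" "is_basis T m M (\<lambda>i j. t ^ e i * b i j)"
    using e unfolding elem_div_vals_def by blast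
  obtain b' where b': "is_basis T m (freemod T m) b'" "is_basis T m M (\<lambda>i j. t ^ f i * b' i j)"
    using f unfolding elem_div_vals_def by blast
  have sum_min_eq: "(\<Sum>i<m. min (e i) k) = (\<Sum>i<m. min (f i) k)" for k
  proof -
    note B = is_basis_add_t_power_freemod[OF b M0, of k] is_basis_add_t_power_freemod[OF b' M0, of k]
    have "int (\<Sum>i<m. min (f i) k) = v (det (basis_mat m (\<lambda>i j. t ^ min (f i) k * b' i j)))"
      using det_t_power_scaled_basis[OF b'(1)] by simp
    also have "\<dots> = v (det (basis_mat m (\<lambda>i j. t ^ min (e i) k * b i j)))"
      using v_det_basis_mat_eq[OF B det_t_power_scaled_basis(1)[OF b(1)]] by simp
    also have "\<dots> = int (\<Sum>i<m. min (e i) k)"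
      using det_t_power_scaled_basis[OF b(1)] by simp
    finally show ?thesis
      by (simp only: of_nat_eq_iff)
  qed
  have e_sorted: "\<forall>i j. i \<le> j \<longrightarrow> j < m \<longrightarrow> e i \<le> e j"
    using e unfolding elem_div_vals_def by (rule conjunct1)
  have f_sorted: "\<forall>i j. i \<le> j \<longrightarrow> j < m \<longrightarrow> f i \<le> f j"
    using f unfolding elem_div_vals_def by (rule conjunct1)
  show ?thesis
    by (rule sorted_eq_of_sum_min_eq[OF e_sorted f_sorted sum_min_eq i])
qed

end

section \<open>Lagrange interpolation\<close>

lemma lagrange_basis_at_node:
  fixes \<tau> :: "nat \<Rightarrow> 'a::field"
  assumes inj: "inj_on \<tau> {..<i}" and j: "j < i" and l: "l < i"
  shows "(\<Prod>k\<in>{..<i} - {j}. \<tau> l - \<tau> k) / (\<Prod>k\<in>{..<i} - {j}. \<tau> j - \<tau> k) = (if l = j then 1 else 0)"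
proof (cases "l = j")
  case True
  have "(\<Prod>k\<in>{..<i} - {j}. \<tau> j - \<tau> k) \<noteq> 0"
    using inj j by (auto simp: inj_on_def)
  then show ?thesis
    using True by simp
next
  case False
  then have "(\<Prod>k\<in>{..<i} - {j}. \<tau> l - \<tau> k) = 0"
    using l by (intro prod_zero bexI[of _ l]) auto
  then show ?thesis
    using False by simp
qed

lemma lagrange_interpolation:
  fixes \<tau> :: "nat \<Rightarrow> 'a::field" and p :: "'a poly"
  assumes inj: "inj_on \<tau> {..<i}" and deg: "degree p < i"
  shows "(\<Sum>j<i. poly p (\<tau> j) * lagrange_coeff \<tau> j i) = poly p (\<tau> i)"
proof -
  define D where "D j = (\<Prod>k\<in>{..<i} - {j}. \<tau> j - \<tau> k)" for j
  define q where "q = (\<Sum>j<i. smult (poly p (\<tau> j) / D j) (\<Prod>k\<in>{..<i} - {j}. [:- \<tau> k, 1:]))"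
  have poly_q: "poly q x = (\<Sum>j<i. poly p (\<tau> j) * ((\<Prod>k\<in>{..<i} - {j}. x - \<tau> k) / D j))" for x
    unfolding q_def by (simp add: poly_sum poly_prod)
  have "degree q \<le> i - 1"
    unfolding q_def
    by (intro degree_sum_le order.trans[OF degree_smult_le]) (auto simp: degree_prod_sum_eq)
  moreover have "poly q (\<tau> l) = poly p (\<tau> l)" if l: "l < i" for l
  proof -
    have "poly q (\<tau> l) = (\<Sum>j<i. if j = l then poly p (\<tau> j) else 0)"
      unfolding poly_q D_def
      by (intro sum.cong refl) (auto simp: lagrange_basis_at_node[OF inj _ l] simp del: times_divide_eq_right)
    then show ?thesis
      using l by simp
  qed
  ultimately have "q = p"
    using deg card_image[OF inj] by (intro poly_eqI_degree[of "\<tau> ` {..<i}"]) auto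
  then show ?thesis
    using poly_q[of "\<tau> i"] by (simp add: lagrange_coeff_def D_def)
qed

lemma lagrange_interpolation_newton:
  fixes \<tau> :: "nat \<Rightarrow> 'a::field"
  assumes inj: "inj_on \<tau> {..<i}" and l: "l < i"
  shows "(\<Sum>j<i. (\<Prod>k<l. \<tau> j - \<tau> k) * lagrange_coeff \<tau> j i) = (\<Prod>k<l. \<tau> i - \<tau> k)"
  using lagrange_interpolation[OF inj, of "\<Prod>k<l. [:- \<tau> k, 1:]"] l
  by (simp add: poly_prod degree_prod_sum_eq)

section \<open>The Newton basis\<close>

locale newton_points = dvr +
  fixes m :: nat and \<tau> :: "nat \<Rightarrow> 'a::field"
  assumes \<tau>_in_T: "\<And>j. j < m \<Longrightarrow> \<tau> j \<in> T"
    and \<tau>_inj: "\<And>i j. i < m \<Longrightarrow> j < m \<Longrightarrow> i \<noteq> j \<Longrightarrow> \<tau> i \<noteq> \<tau> j"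
begin

definition newton :: "nat \<Rightarrow> nat \<Rightarrow> 'a" where
  "newton i j = (if j < m then \<Prod>k<i. \<tau> j - \<tau> k else 0)"

definition \<phi> :: "nat \<Rightarrow> nat" where
  "\<phi> i = (\<Sum>k<i. vt T t (\<tau> i - \<tau> k))"

lemma newton_0: "newton 0 = (\<lambda>j. if j < m then 1 else 0)"
  by (simp add: newton_def fun_eq_iff)

lemma newton_high: "m \<le> j \<Longrightarrow> newton i j = 0"
  by (simp add: newton_def)

lemma newton_Suc: "newton (Suc i) j = (\<tau> j - \<tau> i) * newton i j"
  by (simp add: newton_def)

lemma newton_nonzero: "i \<le> j \<Longrightarrow> j < m \<Longrightarrow> newton i j \<noteq> 0"
  using \<tau>_inj by (auto simp: newton_def)

lemma newton_low: "j < i \<Longrightarrow> newton i j = 0"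
  by (auto simp: newton_def intro!: prod_zero bexI[of _ j])

lemma newton_echelon: "echelon m newton"
  by (simp add: echelon_def newton_nonzero newton_low)

lemma newton_in_T: "i \<le> m \<Longrightarrow> newton i j \<in> T"
  using \<tau>_in_T by (auto simp: newton_def intro!: T_prod T_diff)

lemma v_newton:
  assumes "i \<le> j" "j < m"
  shows "v (newton i j) = int (\<Sum>k<i. vt T t (\<tau> j - \<tau> k))"
proof -
  have nz: "\<tau> j - \<tau> k \<noteq> 0" and T: "\<tau> j - \<tau> k \<in> T" if "k < i" for k
    using that assms \<tau>_inj \<tau>_in_T by auto
  have "v (newton i j) = (\<Sum>k<i. v (\<tau> j - \<tau> k))"
    using assms nz v_prod[of "{..<i}" "\<lambda>k. \<tau> j - \<tau> k"] by (simp add: newton_def)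
  also have "\<dots> = (\<Sum>k<i. int (vt T t (\<tau> j - \<tau> k)))"
    using nz T by (simp add: vt_eq_v)
  finally show ?thesis
    by simp
qed

lemma is_basis_newton: "is_basis T m (lin_span T m newton) newton"
  by (rule is_basis_lin_span_echelon[OF newton_echelon])

lemma lin_span_newton_subset_freemod: "lin_span T m newton \<subseteq> freemod T m"
  by (auto simp: lin_span_def freemod_def newton_high intro!: T_sum T_mult newton_in_T)

lemma newton_in_lin_span: "i \<le> m \<Longrightarrow> newton i \<in> lin_span T m newton"
proof (cases "i = m")
  case True
  then have "newton i = (\<lambda>_. 0)"
    by (auto simp: newton_def fun_eq_iff intro: prod_zero)
  then show ?thesis
    using is_submodule_lin_span by (simp add: is_submodule_def)
qed (simp add: in_lin_span)

lemma lin_span_newton_mult: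
  assumes "\<eta> \<in> lin_span T m newton"
  shows "(\<lambda>j. \<tau> j * \<eta> j) \<in> lin_span T m newton"
proof -
  obtain a where a: "\<forall>i<m. a i \<in> T" "\<eta> = (\<lambda>j. \<Sum>i<m. a i * newton i j)"
    using assms by (auto simp: lin_span_def)
  have "\<tau> j * (a i * newton i j) = a i * newton (Suc i) j + (a i * \<tau> i) * newton i j" for i j
    by (simp add: newton_Suc algebra_simps)
  then have "(\<lambda>j. \<tau> j * \<eta> j) = (\<lambda>j. (\<Sum>i<m. a i * newton (Suc i) j) + (\<Sum>i<m. (a i * \<tau> i) * newton i j))"
    by (simp add: a(2) sum_distrib_left sum.distrib)
  moreover have "(\<lambda>j. \<Sum>i<m. a i * newton (Suc i) j) \<in> lin_span T m newton"
    using a(1) by (intro submodule_lincomb[OF is_submodule_lin_span] newton_in_lin_span) auto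
  moreover have "(\<lambda>j. \<Sum>i<m. (a i * \<tau> i) * newton i j) \<in> lin_span T m newton"
    using a(1) \<tau>_in_T by (intro submodule_lincomb[OF is_submodule_lin_span] in_lin_span) auto
  ultimately show ?thesis
    using is_submodule_lin_span by (simp add: is_submodule_def)
qed

lemma newton_lagrange_sum:
  assumes i: "i < m" and a: "\<And>j. j < m \<Longrightarrow> \<eta> j = (\<Sum>l<m. a l * newton l j)"
  shows "(\<Sum>j<i. \<eta> j * lagrange_coeff \<tau> j i) = (\<Sum>l<i. a l * newton l i)"
proof -
  have inj: "inj_on \<tau> {..<i}"
    using \<tau>_inj i unfolding inj_on_def by (metis lessThan_iff order.strict_trans)
  have \<eta>: "\<eta> j = (\<Sum>l<i. a l * newton l j)" if "j < i" for j
  proof -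
    have "(\<Sum>l<m. a l * newton l j) = (\<Sum>l<i. a l * newton l j)"
      using that i by (intro sum.mono_neutral_right) (auto simp: newton_low)
    then show ?thesis
      using a[of j] that i by simp
  qed
  have "(\<Sum>j<i. \<eta> j * lagrange_coeff \<tau> j i) = (\<Sum>j<i. \<Sum>l<i. a l * (newton l j * lagrange_coeff \<tau> j i))"
    by (simp add: \<eta> sum_distrib_right mult.assoc)
  also have "\<dots> = (\<Sum>l<i. a l * (\<Sum>j<i. newton l j * lagrange_coeff \<tau> j i))"
    by (subst sum.swap) (simp add: sum_distrib_left)
  also have "\<dots> = (\<Sum>l<i. a l * newton l i)"
  proof (intro sum.cong refl arg_cong[where f = "\<lambda>x. _ * x"])
    fix l assume "l \<in> {..<i}"
    then have "(\<Sum>j<i. newton l j * lagrange_coeff \<tau> j i) = (\<Prod>k<l. \<tau> i - \<tau> k)"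
      using i lagrange_interpolation_newton[OF inj, of l] by (simp add: newton_def)
    then show "(\<Sum>j<i. newton l j * lagrange_coeff \<tau> j i) = newton l i"
      using i by (simp add: newton_def)
  qed
  finally show ?thesis .
qed

lemma mem_lin_span_newton_iff:
  assumes \<eta>: "\<eta> \<in> freemod T m"
  shows "\<eta> \<in> lin_span T m newton \<longleftrightarrow>
    (\<forall>i<m. \<exists>y\<in>T. \<eta> i - (\<Sum>j<i. \<eta> j * lagrange_coeff \<tau> j i) = t ^ \<phi> i * y)"
proof -
  obtain a where a: "\<And>j. j < m \<Longrightarrow> \<eta> j = (\<Sum>i<m. a i * newton i j)"
    by (rule echelon_solve[OF newton_echelon, where \<eta> = \<eta>]) blast
  have "\<eta> \<in> lin_span T m newton \<longleftrightarrow> (\<forall>i<m. a i \<in> T)"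
    using \<eta> by (intro mem_lin_span_echelon_iff[OF newton_echelon _ _ a]) (auto simp: newton_high freemod_def)
  moreover have "a i \<in> T \<longleftrightarrow> (\<exists>y\<in>T. \<eta> i - (\<Sum>j<i. \<eta> j * lagrange_coeff \<tau> j i) = t ^ \<phi> i * y)"
    if i: "i < m" for i
  proof -
    have "\<eta> i - (\<Sum>j<i. \<eta> j * lagrange_coeff \<tau> j i) = a i * newton i i"
      using echelon_pivot_eq[OF newton_echelon i, of \<eta> a] a[OF i] newton_lagrange_sum[OF i a] by simp
    moreover have "newton i i \<noteq> 0" "v (newton i i) = int (\<phi> i)"
      using newton_nonzero[of i i] v_newton[of i i] i by (simp_all add: \<phi>_def)
    moreover have "a i * newton i i = 0 \<or> int (\<phi> i) \<le> v (a i * newton i i) \<longleftrightarrow> a i \<in> T"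
      using calculation(2,3) by (cases "a i = 0") (simp_all add: v_mult T_eq)
    ultimately show ?thesis
      by (simp add: t_power_dvd_iff)
  qed
  ultimately show ?thesis
    by simp
qed

lemma lin_span_newton_eq:
  "lin_span T m newton = {\<eta> \<in> freemod T m. \<forall>i<m. \<exists>y\<in>T.
     \<eta> i - (\<Sum>j<i. \<eta> j * lagrange_coeff \<tau> j i) = t ^ \<phi> i * y}"
  using mem_lin_span_newton_iff lin_span_newton_subset_freemod by blast

lemma \<phi>_le:
  assumes "minimally_ordered T t m \<tau>" "i \<le> j" "j < m"
  shows "\<phi> i \<le> (\<Sum>k<i. vt T t (\<tau> j - \<tau> k))"
  using assms unfolding minimally_ordered_def \<phi>_def by (cases "i = j") auto

lemma \<phi>_mono:
  assumes "minimally_ordered T t m \<tau>" "i \<le> j" "j < m"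
  shows "\<phi> i \<le> \<phi> j"
proof -
  have "\<phi> i \<le> (\<Sum>k<i. vt T t (\<tau> j - \<tau> k))"
    using \<phi>_le[OF assms] .
  also have "\<dots> \<le> \<phi> j"
    unfolding \<phi>_def using assms by (intro sum_mono2) auto
  finally show ?thesis .
qed

lemma elem_div_vals_newton:
  assumes mo: "minimally_ordered T t m \<tau>"
  shows "elem_div_vals T t m (lin_span T m newton) \<phi>"
proof -
  define b where "b i j = newton i j / t ^ \<phi> i" for i j
  have v_b: "v (b i j) = v (newton i j) - int (\<phi> i)" if "i \<le> j" "j < m" for i j
    using newton_nonzero[OF that] t_nonzero by (simp add: b_def v_divide)
  have "echelon m b"
    using newton_echelon t_nonzero by (simp add: echelon_def b_def)
  moreover have "v (b i i) = 0" if "i < m" for i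
    using v_b[of i i] v_newton[of i i] that by (simp add: \<phi>_def)
  moreover have "b i j \<in> T" if "i < m" "j < m" for i j
  proof (cases "j < i")
    case False
    then have "int (\<phi> i) \<le> v (newton i j)"
      using v_newton[of i j] \<phi>_le[OF mo, of i j] that by (simp del: of_nat_sum)
    then show ?thesis
      using v_b[of i j] False that by (simp add: T_eq)
  qed (simp add: b_def newton_low)
  moreover have "b i j = 0" if "m \<le> j" for i j
    using that by (simp add: b_def newton_high)
  ultimately have "freemod T m = lin_span T m b"
    by (intro freemod_eq_lin_span_echelon)
  then have "is_basis T m (freemod T m) b"
    using is_basis_lin_span_echelon[OF \<open>echelon m b\<close>] by simp
  moreover have "(\<lambda>i j. t ^ \<phi> i * b i j) = newton"
    using t_nonzero by (simp add: b_def fun_eq_iff)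
  ultimately show ?thesis
    unfolding elem_div_vals_def using is_basis_newton \<phi>_mono[OF mo] by auto
qed

lemma elem_div_vals_newton_unique:
  assumes "minimally_ordered T t m \<tau>" "elem_div_vals T t m (lin_span T m newton) e" "i < m"
  shows "e i = \<phi> i"
  using elem_div_vals_unique[OF assms(2) elem_div_vals_newton[OF assms(1)]
      submodule_zero[OF is_submodule_lin_span] assms(3)] .

lemma newton_in_submodule:
  assumes M: "is_submodule T M" and one: "(\<lambda>j. if j < m then 1 else 0) \<in> M"
    and mult: "\<And>\<eta>. \<eta> \<in> M \<Longrightarrow> (\<lambda>j. \<tau> j * \<eta> j) \<in> M"
  shows "i \<le> m \<Longrightarrow> newton i \<in> M"
proof (induction i)
  case 0
  then show ?case
    using one by (simp only: newton_0)
next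
  case (Suc i)
  then have IH: "newton i \<in> M" and "- \<tau> i \<in> T"
    using \<tau>_in_T[of i] by auto
  then have "(\<lambda>j. \<tau> j * newton i j + (- \<tau> i) * newton i j) \<in> M"
    by (intro submodule_add[OF M] submodule_smult[OF M] mult)
  moreover have "newton (Suc i) = (\<lambda>j. \<tau> j * newton i j + (- \<tau> i) * newton i j)"
    by (simp add: newton_Suc fun_eq_iff algebra_simps)
  ultimately show ?case
    by (simp only:)
qed

lemma powers_in_submodule:
  assumes M: "is_submodule T M" and one: "(\<lambda>j. if j < m then 1 else 0) \<in> M"
    and mult: "\<And>\<eta>. \<eta> \<in> M \<Longrightarrow> (\<lambda>j. \<tau> j * \<eta> j) \<in> M"
  shows "(\<lambda>j. if j < m then \<tau> j ^ l else 0) \<in> M"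
proof (induction l)
  case (Suc l)
  have "(\<lambda>j. if j < m then \<tau> j ^ Suc l else 0) = (\<lambda>j. \<tau> j * (if j < m then \<tau> j ^ l else 0))"
    by auto
  then show ?case
    using mult[OF Suc] by simp
next
  case 0
  have "(\<lambda>j. if j < m then \<tau> j ^ 0 else 0) = (\<lambda>j. if j < m then 1 else 0)"
    by (simp only: power_0)
  then show ?case
    using one by (simp only:)
qed

end

section \<open>The Dedekind embedding\<close>

lemma field_automorphism_comm_ring_hom:
  assumes "field_automorphism \<sigma>"
  shows "comm_ring_hom \<sigma>"
proof -
  have add: "\<sigma> (x + y) = \<sigma> x + \<sigma> y" and mult: "\<sigma> (x * y) = \<sigma> x * \<sigma> y" for x y
    using assms by (simp_all add: field_automorphism_def)
  obtain z where "\<sigma> z = 1"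
    using assms by (metis field_automorphism_def bij_pointE)
  then have "\<sigma> 1 = 1"
    using mult[of 1 z] by simp
  moreover have "\<sigma> 0 = 0"
    using add[of 0 0] by (simp only: add_0_left add_cancel_right_right)
  ultimately show ?thesis
    by unfold_locales (simp_all add: add mult)
qed

lemma dedekind_image_high: "\<eta> \<in> dedekind_image T m \<sigma> \<Longrightarrow> m \<le> j \<Longrightarrow> \<eta> j = 0"
  by (auto simp: dedekind_image_def)

context valuation_ring
begin

lemma dedekind_image_add:
  assumes \<eta>1: "\<eta>1 \<in> dedekind_image T m \<sigma>" and \<eta>2: "\<eta>2 \<in> dedekind_image T m \<sigma>"
  shows "(\<lambda>j. \<eta>1 j + \<eta>2 j) \<in> dedekind_image T m \<sigma>"
proof -
  obtain n1 :: nat and x1 y1 where 1: "\<forall>k<n1. x1 k \<in> T \<and> y1 k \<in> T"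
    "\<forall>j<m. \<eta>1 j = (\<Sum>k<n1. x1 k * \<sigma> j (y1 k))" "\<forall>j\<ge>m. \<eta>1 j = 0"
    using \<eta>1 unfolding dedekind_image_def by blast
  obtain n2 :: nat and x2 y2 where 2: "\<forall>k<n2. x2 k \<in> T \<and> y2 k \<in> T"
    "\<forall>j<m. \<eta>2 j = (\<Sum>k<n2. x2 k * \<sigma> j (y2 k))" "\<forall>j\<ge>m. \<eta>2 j = 0"
    using \<eta>2 unfolding dedekind_image_def by blast
  define x where "x k = (if k < n1 then x1 k else x2 (k - n1))" for k
  define y where "y k = (if k < n1 then y1 k else y2 (k - n1))" for k
  have split: "(\<Sum>k<n1 + n. f k) = (\<Sum>k<n1. f k) + (\<Sum>k<n. f (n1 + k))" for n and f :: "nat \<Rightarrow> 'a"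
    by (induction n) (simp_all add: add.assoc)
  have "\<forall>k<n1 + n2. x k \<in> T \<and> y k \<in> T"
    using 1(1) 2(1) by (auto simp: x_def y_def)
  moreover have "\<forall>j<m. \<eta>1 j + \<eta>2 j = (\<Sum>k<n1 + n2. x k * \<sigma> j (y k))"
    using 1(2) 2(2) by (simp add: split x_def y_def)
  ultimately show ?thesis
    using 1(3) 2(3) unfolding dedekind_image_def
    by (intro CollectI exI[of _ "n1 + n2"] exI[of _ x] exI[of _ y]) auto
qed

lemma is_submodule_dedekind_image: "is_submodule T (dedekind_image T m \<sigma>)"
proof -
  have "(\<lambda>_. 0) \<in> dedekind_image T m \<sigma>"
    unfolding dedekind_image_def by (intro CollectI exI[of _ 0]) auto
  moreover have "(\<lambda>j. c * \<eta> j) \<in> dedekind_image T m \<sigma>"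
    if c: "c \<in> T" and \<eta>: "\<eta> \<in> dedekind_image T m \<sigma>" for c \<eta>
  proof -
    obtain n :: nat and x y where "\<forall>k<n. x k \<in> T \<and> y k \<in> T"
      "\<forall>j<m. \<eta> j = (\<Sum>k<n. x k * \<sigma> j (y k))" "\<forall>j\<ge>m. \<eta> j = 0"
      using \<eta> unfolding dedekind_image_def by blast
    then show ?thesis
      using c unfolding dedekind_image_def
      by (intro CollectI exI[of _ n] exI[of _ "\<lambda>k. c * x k"] exI[of _ y])
        (auto simp: sum_distrib_left mult.assoc)
  qed
  ultimately show ?thesis
    using dedekind_image_add by (simp add: is_submodule_def)
qed

lemma dedekind_image_generator:
  assumes "x \<in> T" "y \<in> T"
  shows "(\<lambda>j. if j < m then x * \<sigma> j y else 0) \<in> dedekind_image T m \<sigma>"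
  using assms unfolding dedekind_image_def
  by (intro CollectI exI[of _ 1] exI[of _ "\<lambda>_. x"] exI[of _ "\<lambda>_. y"]) auto

lemma dedekind_image_subset:
  assumes M: "is_submodule T M"
    and gen: "\<And>x y. x \<in> T \<Longrightarrow> y \<in> T \<Longrightarrow> (\<lambda>j. if j < m then x * \<sigma> j y else 0) \<in> M"
  shows "dedekind_image T m \<sigma> \<subseteq> M"
proof
  fix \<eta> assume "\<eta> \<in> dedekind_image T m \<sigma>"
  then obtain n :: nat and x y where xy: "\<forall>k<n. x k \<in> T \<and> y k \<in> T"
    "\<forall>j<m. \<eta> j = (\<Sum>k<n. x k * \<sigma> j (y k))" "\<forall>j\<ge>m. \<eta> j = 0"
    unfolding dedekind_image_def by blast
  have "\<eta> = (\<lambda>j. \<Sum>k<n. (if j < m then x k * \<sigma> j (y k) else 0))"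
  proof
    show "\<eta> j = (\<Sum>k<n. (if j < m then x k * \<sigma> j (y k) else 0))" for j
      using xy by (cases "j < m") auto
  qed
  also have "\<dots> \<in> M"
    using xy(1) by (intro submodule_sum[OF M] gen) auto
  finally show "\<eta> \<in> M" .
qed

lemma dedekind_image_mult:
  assumes \<theta>: "\<theta> \<in> T" and hom: "\<And>j x. j < m \<Longrightarrow> \<sigma> j (\<theta> * x) = \<sigma> j \<theta> * \<sigma> j x"
    and \<eta>: "\<eta> \<in> dedekind_image T m \<sigma>"
  shows "(\<lambda>j. \<sigma> j \<theta> * \<eta> j) \<in> dedekind_image T m \<sigma>"
proof -
  obtain n :: nat and x y where "\<forall>k<n. x k \<in> T \<and> y k \<in> T"
    "\<forall>j<m. \<eta> j = (\<Sum>k<n. x k * \<sigma> j (y k))" "\<forall>j\<ge>m. \<eta> j = 0"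
    using \<eta> unfolding dedekind_image_def by blast
  then show ?thesis
    using \<theta> unfolding dedekind_image_def
    by (intro CollectI exI[of _ n] exI[of _ x] exI[of _ "\<lambda>k. \<theta> * y k"])
      (auto simp: hom sum_distrib_left algebra_simps)
qed

end

context newton_points
begin

lemma dedekind_image_subset_lin_span_newton:
  assumes hom: "\<And>j. j < m \<Longrightarrow> comm_ring_hom (\<sigma> j)"
    and \<sigma>_S: "\<And>j c. j < m \<Longrightarrow> c \<in> S \<Longrightarrow> \<sigma> j c = c"
    and \<sigma>_\<theta>: "\<And>j. j < m \<Longrightarrow> \<sigma> j \<theta> = \<tau> j"
    and S_T: "S \<subseteq> T" and T_gen: "T = {x. \<exists>n c. (\<forall>i<n. c i \<in> S) \<and> x = (\<Sum>i<n. c i * \<theta> ^ i)}"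
  shows "dedekind_image T m \<sigma> \<subseteq> lin_span T m newton"
proof (rule dedekind_image_subset[OF is_submodule_lin_span])
  fix x y assume "x \<in> T" "y \<in> T"
  then obtain n c where c: "\<forall>i<n. c i \<in> S" "y = (\<Sum>i<n. c i * \<theta> ^ i)"
    using T_gen by blast
  have "\<sigma> j y = (\<Sum>i<n. c i * \<tau> j ^ i)" if "j < m" for j
  proof -
    interpret comm_ring_hom "\<sigma> j"
      by (rule hom[OF that])
    show ?thesis
      using c \<sigma>_S[OF that] \<sigma>_\<theta>[OF that] by (simp add: hom_sum hom_mult hom_power)
  qed
  then have "(\<lambda>j. if j < m then x * \<sigma> j y else 0) =
      (\<lambda>j. \<Sum>i<n. (x * c i) * (if j < m then \<tau> j ^ i else 0))"
    by (auto simp: fun_eq_iff sum_distrib_left mult.assoc)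
  also have "\<dots> \<in> lin_span T m newton"
    using c(1) S_T \<open>x \<in> T\<close> newton_in_lin_span[of 0, unfolded newton_0]
    by (intro submodule_lincomb[OF is_submodule_lin_span] powers_in_submodule[OF is_submodule_lin_span])
      (auto simp: lin_span_newton_mult)
  finally show "(\<lambda>j. if j < m then x * \<sigma> j y else 0) \<in> lin_span T m newton" .
qed

lemma lin_span_newton_subset_dedekind_image:
  assumes hom: "\<And>j. j < m \<Longrightarrow> comm_ring_hom (\<sigma> j)"
    and \<sigma>_\<theta>: "\<And>j. j < m \<Longrightarrow> \<sigma> j \<theta> = \<tau> j" and \<theta>: "\<theta> \<in> T"
  shows "lin_span T m newton \<subseteq> dedekind_image T m \<sigma>"
proof -
  have \<sigma>_1: "\<sigma> j 1 = 1" and \<sigma>_mult: "\<sigma> j (a * b) = \<sigma> j a * \<sigma> j b" if "j < m" for j a b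
  proof -
    interpret comm_ring_hom "\<sigma> j"
      by (rule hom[OF that])
    show "\<sigma> j 1 = 1" "\<sigma> j (a * b) = \<sigma> j a * \<sigma> j b"
      by (simp_all add: hom_mult)
  qed
  have "(\<lambda>j. if j < m then 1 else 0) \<in> dedekind_image T m \<sigma>"
    using dedekind_image_generator[of 1 1 m \<sigma>] \<sigma>_1 by (simp cong: if_cong)
  moreover have "(\<lambda>j. \<tau> j * \<eta> j) \<in> dedekind_image T m \<sigma>" if \<eta>: "\<eta> \<in> dedekind_image T m \<sigma>" for \<eta>
  proof -
    have "(\<lambda>j. \<sigma> j \<theta> * \<eta> j) = (\<lambda>j. \<tau> j * \<eta> j)"
    proof
      show "\<sigma> j \<theta> * \<eta> j = \<tau> j * \<eta> j" for j
        by (cases "j < m") (simp_all add: \<sigma>_\<theta> dedekind_image_high[OF \<eta>])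
    qed
    then show ?thesis
      using dedekind_image_mult[OF \<theta> \<sigma>_mult \<eta>] by simp
  qed
  ultimately show ?thesis
    by (intro lin_span_subset[OF is_submodule_dedekind_image] newton_in_submodule[OF is_submodule_dedekind_image])
      auto
qed

end

theorem proposition1p14:
  fixes S T K :: "'a::field set" and G :: "('a \<Rightarrow> 'a) set"
    and t \<theta> :: 'a and m :: nat and \<sigma> :: "nat \<Rightarrow> 'a \<Rightarrow> 'a"
  assumes dvrT: "is_dvr UNIV T"
    and dvrS: "is_dvr K S"
    and ST: "S \<subseteq> T"
    and gal: "galois_with_group G K"
    and m_def: "m = card G"
    and G_T: "\<forall>\<rho>\<in>G. \<rho> ` T \<subseteq> T"
    and t_gen: "t \<in> T" "{t * y | y. y \<in> T} = T - units_of_ring T"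
    and theta: "\<theta> \<in> T" "T = {x. \<exists>n c. (\<forall>i<n. c i \<in> S) \<and> x = (\<Sum>i<n. c i * \<theta> ^ i)}"
    and enum: "bij_betw \<sigma> {..<m} G" "\<sigma> 0 = id"
    and minord: "minimally_ordered T t m (\<lambda>j. \<sigma> j \<theta>)"
  shows
    "(\<forall>e. elem_div_vals T t m (dedekind_image T m \<sigma>) e \<longrightarrow>
          (\<forall>i<m. e i = (\<Sum>j<i. vt T t (\<sigma> i \<theta> - \<sigma> j \<theta>)))) \<and>
     elem_div_vals T t m (dedekind_image T m \<sigma>) (\<lambda>i. \<Sum>j<i. vt T t (\<sigma> i \<theta> - \<sigma> j \<theta>))
   \<and> dedekind_image T m \<sigma> =
       {\<eta> \<in> freemod T m. \<forall>i<m. \<exists>y\<in>T.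
          \<eta> i - (\<Sum>j<i. \<eta> j * lagrange_coeff (\<lambda>k. \<sigma> k \<theta>) j i)
            = t ^ (\<Sum>j<i. vt T t (\<sigma> i \<theta> - \<sigma> j \<theta>)) * y}
   \<and> is_basis T m (dedekind_image T m \<sigma>)
       (\<lambda>i j. if j < m then (\<Prod>k<i. \<sigma> j \<theta> - \<sigma> k \<theta>) else 0)"
proof -
  obtain v x where vr: "valuation_ring T v" and x: "x \<noteq> 0" "v x = 1"
    using is_dvr_valuation_ring[OF dvrT] by blast
  have \<sigma>_G: "\<sigma> j \<in> G" if "j < m" for j
    using enum(1) that by (auto dest: bij_betw_apply)
  then have hom: "comm_ring_hom (\<sigma> j)" if "j < m" for j
    using gal that by (auto simp: galois_with_group_def intro: field_automorphism_comm_ring_hom)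
  have \<sigma>_S: "\<sigma> j c = c" if "j < m" "c \<in> S" for j c
    using gal dvrS \<sigma>_G[OF that(1)] that(2) by (auto simp: galois_with_group_def is_dvr_def)
  interpret newton_points T v t m "\<lambda>j. \<sigma> j \<theta>"
    using valuation_ring.dvr_if_generates_maximal_ideal[OF vr t_gen x] G_T \<sigma>_G theta(1) minord
    by (auto simp: newton_points_def newton_points_axioms_def minimally_ordered_def)
  have ded: "dedekind_image T m \<sigma> = lin_span T m newton"
    by (intro equalityI dedekind_image_subset_lin_span_newton[OF hom \<sigma>_S _ ST theta(2)]
        lin_span_newton_subset_dedekind_image[OF hom _ theta(1)] refl)
  have \<phi>_eq: "(\<Sum>j<i. vt T t (\<sigma> i \<theta> - \<sigma> j \<theta>)) = \<phi> i" for i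
    by (simp add: \<phi>_def)
  have newton_eq: "(\<lambda>i j. if j < m then \<Prod>k<i. \<sigma> j \<theta> - \<sigma> k \<theta> else 0) = newton"
    by (simp add: newton_def fun_eq_iff)
  show ?thesis
    unfolding ded \<phi>_eq newton_eq lin_span_newton_eq[symmetric]
    using elem_div_vals_newton_unique[OF minord] elem_div_vals_newton[OF minord] is_basis_newton
    by (intro conjI allI impI refl)
qed

end
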